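(* Let $\mathcal{F}=(A,R)$ and $\mathcal{G}=(A,R')$ be argumentation frameworks with $R\subseteq R'$ and $\mathrm{conf}(\mathcal{F})=\mathrm{conf}(\mathcal{G})$, and let $S\in\mathit{tfcf2}(\mathcal{F})$. Then $S\in\mathit{tfcf2}(\mathcal{G})$. In particular, $\mathit{tfcf2}$ is both $\preceq^E_\cap$-skepticism adequate and $\preceq^E_W$-skepticism adequate.
   Context: An argumentation framework (AF) is $\mathcal{F}=(A_{\mathcal{F}},R_{\mathcal{F}})$ with $R_{\mathcal{F}}\subseteq A_{\mathcal{F}}\times A_{\mathcal{F}}$ (possibly infinite); $a\rightarrow b$ means $(a,b)\in R_{\mathcal{F}}$. $\mathrm{conf}(\mathcal{F})=\{(x,y):(x,y)\in R_{\mathcal{F}}\text{ or }(y,x)\in R_{\mathcal{F}}\}$. $\tau_1\preceq^E_\cap\tau_2$ iff $\bigcap_{S_1\in\tau_1}S_1\subseteq\bigcap_{S_2\in\tau_2}S_2$; $\tau_1\preceq^E_W\tau_2$ iff for every $S_2\in\tau_2$ there is $S_1\in\tau_1$ with $S_1\subseteq S_2$. A semantics $\sigma$ is $\preceq$-skepticism adequate if for any AFs $\mathcal{F},\mathcal{G}$ on the same argument set with $R_{\mathcal{F}}\supseteq R_{\mathcal{G}}$ and $\mathrm{conf}(\mathcal{F})=\mathrm{conf}(\mathcal{G})$, $\sigma(\mathcal{F})\preceq\sigma(\mathcal{G})$. $\mathcal{F}|_B=(A_{\mathcal{F}}\cap B,R_{\mathcal{F}}\cap(B\times B))$. Conflict-free: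 no $a,b\in S$ with $a\rightarrow b$; naive: $\subseteq$-maximal conflict-free. $\mathrm{SCC}(a)$: set of $b$ with directed attack paths (possibly of length 0) from $a$ to $b$ and back. $D_S(X)=\{b\in X:\exists a\in S\setminus X,\ a\rightarrow b\}$. $C^0_S(a)=\mathrm{SCC}(a)$; $C^{\alpha+1}_S(a)$ = component of $a$ in $\mathcal{F}|_{C^\alpha_S(a)\setminus D_S(C^\alpha_S(a))}$ (empty if $a$ not there); for limit $\lambda$, component of $a$ in $\mathcal{F}|_{\bigcap_{\alpha<\lambda}C^\alpha_S(a)}$; $\alpha_S(a)$ = least $\alpha$ with $a\notin C^\alpha_S(a)$ or $C^{\alpha+1}_S(a)=C^\alpha_S(a)$. $S\in\mathit{tfcf2}(\mathcal{F})$ iff $S$ is conflict-free and for each $a\in A_{\mathcal{F}}$, $a\notin C^{\alpha_S(a)}_S(a)$ or $S\cap C^{\alpha_S(a)}_S(a)$ is a naive extension of $\mathcal{F}|_{C^{\alpha_S(a)}_S(a)}$. *)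

theory Defs
  imports Main
begin

text \<open>An argumentation framework is a pair (A, R) of a (possibly infinite) set of
arguments and an attack relation; well-formedness R \<subseteq> A \<times> A is
assumed explicitly where needed.\<close>

type_synonym 'a af = "'a set \<times> ('a \<times> 'a) set"

definition conf :: "'a af \<Rightarrow> ('a \<times> 'a) set" where
  "conf F = {(x, y). (x, y) \<in> snd F \<or> (y, x) \<in> snd F}"

definition restr :: "'a af \<Rightarrow> 'a set \<Rightarrow> 'a af" where
  "restr F B = (fst F \<inter> B, snd F \<inter> (B \<times> B))"

definition conflict_free :: "'a af \<Rightarrow> 'a set \<Rightarrow> bool" where
  "conflict_free F S \<longleftrightarrow> S \<subseteq> fst F \<and> (\<forall>a\<in>S. \<forall>b\<in>S. (a, b) \<notin> snd F)"

definition naive :: "'a af \<Rightarrow> 'a set \<Rightarrow> bool" where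
  "naive F S \<longleftrightarrow> conflict_free F S \<and> (\<forall>T. conflict_free F T \<and> S \<subseteq> T \<longrightarrow> T = S)"

definition comp :: "'a af \<Rightarrow> 'a \<Rightarrow> 'a set" where
  "comp F a = (if a \<in> fst F then {b. (a, b) \<in> (snd F)\<^sup>* \<and> (b, a) \<in> (snd F)\<^sup>*} else {})"

definition SCC :: "'a af \<Rightarrow> 'a \<Rightarrow> 'a set" where
  "SCC F a = comp F a"

definition D :: "'a af \<Rightarrow> 'a set \<Rightarrow> 'a set \<Rightarrow> 'a set" where
  "D F S X = {b \<in> X. \<exists>a \<in> S - X. (a, b) \<in> snd F}"

definition C_step :: "'a af \<Rightarrow> 'a set \<Rightarrow> 'a \<Rightarrow> 'a set \<Rightarrow> 'a set" where
  "C_step F S a X = comp (restr F (X - D F S X)) a"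

text \<open>The transfinite sequence C^alpha_S(a), alpha an ordinal, represented by the
set of its values (its stages): C^0 = SCC(a); successor steps; and at limits the
component of a in F restricted to the intersection of a (nonempty) chain of
earlier stages.\<close>
inductive_set C_stages :: "'a af \<Rightarrow> 'a set \<Rightarrow> 'a \<Rightarrow> 'a set set"
  for F :: "'a af" and S :: "'a set" and a :: 'a where
  zero: "SCC F a \<in> C_stages F S a"
| succ: "X \<in> C_stages F S a \<Longrightarrow> C_step F S a X \<in> C_stages F S a"
| lim: "(\<And>X. X \<in> M \<Longrightarrow> X \<in> C_stages F S a) \<Longrightarrow> M \<noteq> {} \<Longrightarrow> (\<forall>X\<in>M. \<forall>Y\<in>M. X \<subseteq> Y \<or> Y \<subseteq> X)
        \<Longrightarrow> comp (restr F (\<Inter>M)) a \<in> C_stages F S a"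

text \<open>C^{alpha_S(a)}_S(a): the stage at which a has dropped out or the sequence has
become stationary (all such stages coincide).\<close>
definition C_final :: "'a af \<Rightarrow> 'a set \<Rightarrow> 'a \<Rightarrow> 'a set" where
  "C_final F S a = (THE X. X \<in> C_stages F S a \<and> (a \<notin> X \<or> C_step F S a X = X))"

definition tfcf2 :: "'a af \<Rightarrow> 'a set set" where
  "tfcf2 F = {S. conflict_free F S \<and>
     (\<forall>a \<in> fst F. a \<notin> C_final F S a \<or>
        naive (restr F (C_final F S a)) (S \<inter> C_final F S a))}"

definition skept_cap :: "'a set set \<Rightarrow> 'a set set \<Rightarrow> bool" where
  "skept_cap T1 T2 \<longleftrightarrow> \<Inter>T1 \<subseteq> \<Inter>T2"

definition skept_W :: "'a set set \<Rightarrow> 'a set set \<Rightarrow> bool" where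
  "skept_W T1 T2 \<longleftrightarrow> (\<forall>S2\<in>T2. \<exists>S1\<in>T1. S1 \<subseteq> S2)"

definition skepticism_adequate ::
  "('a af \<Rightarrow> 'a set set) \<Rightarrow> ('a set set \<Rightarrow> 'a set set \<Rightarrow> bool) \<Rightarrow> bool" where
  "skepticism_adequate \<sigma> le \<longleftrightarrow>
     (\<forall>A RF RG. RF \<subseteq> A \<times> A \<and> RG \<subseteq> A \<times> A \<and> RG \<subseteq> RF \<and> conf (A, RF) = conf (A, RG)
        \<longrightarrow> le (\<sigma> (A, RF)) (\<sigma> (A, RG)))"

end

theory Submission
  imports Defs
begin

(* The final stage C^{alpha_S(a)}_S(a) is the greatest fixed point of the step, i.e. the
   largest set X such that X is the component of a in F|X and no member of S - X attacks X.
   Since conf F = conf G, the framework G only turns some attacks of F into mutual ones.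
   Let Y be the final stage of a in G and let T, with S \<inter> Y \<subseteq> T, be conflict-free in G|Y;
   take b \<in> T - S. If some s \<in> S attacks b in F, then s \<in> Y, contradicting conflict-freeness.
   Otherwise b lies in its own final stage W in F, and W \<subseteq> Y: adding to Y \<union> W the members of
   S that attack W in G gives a fixed point of a in G, as these are joined to W by reversed
   F-attacks. So insert b (S \<inter> W) is conflict-free in F|W, contradicting naivety of S \<inter> W. *)

lemma conf_eq_Un_converse: "conf F = snd F \<union> (snd F)\<inverse>"
  by (auto simp: conf_def)

lemma conflict_free_restr_iff: "conflict_free (restr F Y) T \<longleftrightarrow> T \<subseteq> Y \<and> conflict_free F T"
  unfolding conflict_free_def restr_def fst_conv snd_conv by blast

lemma conflict_free_antimono:
  "conflict_free (A, R') T \<Longrightarrow> U \<subseteq> T \<Longrightarrow> R \<subseteq> R' \<Longrightarrow> conflict_free (A, R) U"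
  unfolding conflict_free_def by fastforce

lemma conflict_free_subset_conf:
  "conflict_free (A, R) S \<Longrightarrow> R' \<subseteq> conf (A, R) \<Longrightarrow> conflict_free (A, R') S"
  by (auto simp: conflict_free_def conf_def)

lemma mem_comp_iff:
  "y \<in> comp F x \<longleftrightarrow> x \<in> fst F \<and> (x, y) \<in> (snd F)\<^sup>* \<and> (y, x) \<in> (snd F)\<^sup>*"
  by (simp add: comp_def)

lemma comp_eq_empty_if_not_mem: "x \<notin> comp F x \<Longrightarrow> comp F x = {}"
  by (auto simp: comp_def)

lemma mem_comp_trans: "y \<in> comp F x \<Longrightarrow> z \<in> comp F y \<Longrightarrow> z \<in> comp F x"
  by (auto simp: mem_comp_iff intro: rtrancl_trans)

lemma mem_comp_if_edges:
  "w \<in> comp F x \<Longrightarrow> (w, s) \<in> snd F \<Longrightarrow> (s, w) \<in> snd F \<Longrightarrow> s \<in> comp F x"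
  unfolding mem_comp_iff by (meson rtrancl.rtrancl_into_rtrancl converse_rtrancl_into_rtrancl)

lemma comp_mono: "fst F \<subseteq> fst G \<Longrightarrow> snd F \<subseteq> snd G \<Longrightarrow> comp F x \<subseteq> comp G x"
  using rtrancl_mono[of "snd F" "snd G"] by (auto simp: mem_comp_iff)

lemma comp_restr_mono: "Y \<subseteq> Z \<Longrightarrow> comp (restr F Y) x \<subseteq> comp (restr F Z) x"
  by (rule comp_mono) (auto simp: restr_def)

lemma comp_restr_subset: "comp (restr F Y) x \<subseteq> Y"
proof
  fix y assume "y \<in> comp (restr F Y) x"
  then have "(x, y) \<in> (snd F \<inter> Y \<times> Y)\<^sup>*" and "x \<in> Y"
    by (auto simp: mem_comp_iff restr_def)
  then show "y \<in> Y"
    by (induction rule: rtrancl_induct) auto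
qed

section \<open>The final stage as a greatest fixed point\<close>

lemma C_step_subset: "C_step F S x X \<subseteq> X"
  unfolding C_step_def using comp_restr_subset[of F "X - D F S X" x] by blast

lemma C_step_mono: "X \<subseteq> Y \<Longrightarrow> C_step F S x X \<subseteq> C_step F S x Y"
  unfolding C_step_def by (rule comp_restr_mono) (auto simp: D_def)

lemma C_step_fixpoint_iff:
  "C_step F S x X = X \<longleftrightarrow> D F S X = {} \<and> comp (restr F X) x = X"
proof
  assume fixed: "C_step F S x X = X"
  then have "X \<subseteq> X - D F S X"
    using comp_restr_subset[of F "X - D F S X" x] unfolding C_step_def by simp
  then have "D F S X = {}"
    by (auto simp: D_def)
  with fixed show "D F S X = {} \<and> comp (restr F X) x = X"
    by (simp add: C_step_def)
qed (simp add: C_step_def)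

lemma C_stages_eq_empty_if_not_mem: "Y \<in> C_stages F S x \<Longrightarrow> x \<notin> Y \<Longrightarrow> Y = {}"
  by (induction rule: C_stages.induct)
    (simp_all add: SCC_def C_step_def comp_eq_empty_if_not_mem)

lemma fixpoint_subset_C_stages:
  assumes fixed: "C_step F S x X = X" and "Y \<in> C_stages F S x"
  shows "X \<subseteq> Y"
  using assms(2)
proof (induction rule: C_stages.induct)
  case zero
  have "comp (restr F X) x \<subseteq> comp F x"
    by (rule comp_mono) (auto simp: restr_def)
  with fixed show ?case
    by (simp add: SCC_def C_step_fixpoint_iff)
next
  case (succ Y)
  with fixed C_step_mono show ?case by metis
next
  case (lim M)
  then have "comp (restr F X) x \<subseteq> comp (restr F (\<Inter>M)) x"
    by (intro comp_restr_mono) blast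
  with fixed show ?case
    by (simp add: C_step_fixpoint_iff)
qed

text \<open>The limit of a maximal chain of stages is a fixed point: otherwise its successor
  would extend the chain.\<close>
lemma C_stages_has_fixpoint: "\<exists>L \<in> C_stages F S x. C_step F S x L = L"
proof -
  obtain M where "subset.maxchain (C_stages F S x) M"
    using subset.Hausdorff by blast
  then have M: "M \<subseteq> C_stages F S x" "\<forall>X\<in>M. \<forall>Y\<in>M. X \<subseteq> Y \<or> Y \<subseteq> X"
    and max: "\<not> (\<exists>N. subset.chain (C_stages F S x) N \<and> M \<subset> N)"
    by (auto simp: subset.maxchain_def subset.chain_def)
  have "M \<noteq> {}"
  proof
    assume "M = {}"
    moreover have "subset.chain (C_stages F S x) {SCC F x}"
      by (auto simp: subset.chain_def intro: C_stages.zero)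
    ultimately show False
      using max by blast
  qed
  define L where "L = comp (restr F (\<Inter>M)) x"
  have L: "L \<in> C_stages F S x"
    unfolding L_def using M \<open>M \<noteq> {}\<close> by (intro C_stages.lim) auto
  have L_below: "L \<subseteq> \<Inter>M"
    unfolding L_def by (rule comp_restr_subset)
  have "C_step F S x L \<in> M"
  proof (rule ccontr)
    assume "C_step F S x L \<notin> M"
    moreover have "subset.chain (C_stages F S x) (insert (C_step F S x L) M)"
      using M L_below C_step_subset[of F S x L] C_stages.succ[OF L]
      by (auto simp: subset.chain_def)
    ultimately show False
      using max by blast
  qed
  then have "L \<subseteq> C_step F S x L"
    using L_below by blast
  then have "C_step F S x L = L"
    using C_step_subset[of F S x L] by blast
  with L show ?thesis ..
qed

lemma C_final_eq_fixpoint: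
  assumes L: "L \<in> C_stages F S x" "C_step F S x L = L"
  shows "C_final F S x = L"
  unfolding C_final_def
proof (rule the_equality)
  fix X assume X: "X \<in> C_stages F S x \<and> (x \<notin> X \<or> C_step F S x X = X)"
  have "C_step F S x X = X"
    using X C_stages_eq_empty_if_not_mem[of X F S x] C_step_subset[of F S x "{}"] by blast
  with X L show "X = L"
    using fixpoint_subset_C_stages by (metis subset_antisym)
qed (use L in simp)

lemma C_final_fixpoint: "C_step F S x (C_final F S x) = C_final F S x"
  using C_stages_has_fixpoint C_final_eq_fixpoint by metis

lemma fixpoint_subset_C_final: "C_step F S x X = X \<Longrightarrow> X \<subseteq> C_final F S x"
  using C_stages_has_fixpoint C_final_eq_fixpoint fixpoint_subset_C_stages by metis

lemma D_C_final: "D F S (C_final F S x) = {}"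
  using C_final_fixpoint C_step_fixpoint_iff by metis

lemma comp_restr_C_final: "comp (restr F (C_final F S x)) x = C_final F S x"
  using C_final_fixpoint C_step_fixpoint_iff by metis

lemma subset_C_final: "comp (restr F X) x = X \<Longrightarrow> D F S X = {} \<Longrightarrow> X \<subseteq> C_final F S x"
  by (simp add: C_step_fixpoint_iff fixpoint_subset_C_final)

lemma mem_C_final_if_unattacked:
  assumes "b \<in> fst F" "\<forall>s\<in>S. (s, b) \<notin> snd F"
  shows "b \<in> C_final F S b"
proof -
  have "comp (restr F {b}) b = {b}"
    using assms(1) comp_restr_subset[of F "{b}" b] by (auto simp: mem_comp_iff restr_def)
  moreover have "D F S {b} = {}"
    using assms(2) by (auto simp: D_def)
  ultimately have "{b} \<subseteq> C_final F S b"
    by (rule subset_C_final)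
  then show ?thesis
    by simp
qed

section \<open>Adding attacks along existing conflicts\<close>

lemma C_final_subset_C_final_more_attacks:
  assumes RR': "R \<subseteq> R'" "R' \<subseteq> conf (A, R)" and cf: "conflict_free (A, R') S"
    and b: "b \<in> C_final (A, R') S a" "b \<in> C_final (A, R) S b"
  shows "C_final (A, R) S b \<subseteq> C_final (A, R') S a"
proof -
  define Y where "Y = C_final (A, R') S a"
  define W where "W = C_final (A, R) S b"
  define X where "X = Y \<union> W \<union> {s \<in> S - W. \<exists>w\<in>W. (s, w) \<in> R'}"
  define G where "G = restr (A, R') X"
  have "Y \<subseteq> X"
    by (auto simp: X_def)
  then have "comp (restr (A, R') Y) a \<subseteq> comp G a"
    unfolding G_def by (rule comp_restr_mono)
  then have "Y \<subseteq> comp G a"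
    using comp_restr_C_final[of "(A, R')" S a] by (simp add: Y_def)
  then have b_a: "b \<in> comp G a"
    using b Y_def by blast
  have "W \<subseteq> comp G b"
    using comp_mono[of "restr (A, R) W" G b] comp_restr_C_final[of "(A, R)" S b] RR'(1)
    by (auto simp: G_def X_def W_def restr_def)
  then have W_a: "W \<subseteq> comp G a"
    using mem_comp_trans[OF b_a] by blast
  have "s \<in> comp G a" if s: "s \<in> S - W" "w \<in> W" "(s, w) \<in> R'" for s w
  proof (rule mem_comp_if_edges)
    show "w \<in> comp G a"
      using W_a s(2) by blast
    have "(s, w) \<notin> R"
      using s D_C_final[of "(A, R)" S b] by (auto simp: D_def W_def)
    then have "(w, s) \<in> R"
      using s(3) RR'(2) by (auto simp: conf_def)
    moreover have "s \<in> X" "w \<in> X"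
      using s by (auto simp: X_def)
    ultimately show "(w, s) \<in> snd G" "(s, w) \<in> snd G"
      using s(3) RR'(1) by (auto simp: G_def restr_def)
  qed
  then have "X \<subseteq> comp G a"
    using \<open>Y \<subseteq> comp G a\<close> W_a unfolding X_def by blast
  moreover have "comp G a \<subseteq> X"
    unfolding G_def by (rule comp_restr_subset)
  ultimately have "comp G a = X"
    by blast
  moreover have "D (A, R') S X = {}"
  proof -
    have False if z: "z \<in> X" "s \<in> S - X" "(s, z) \<in> R'" for s z
    proof -
      consider "z \<in> Y" | "z \<in> W" | "z \<in> S"
        using z(1) by (auto simp: X_def)
      then show False
      proof cases
        case 1
        then show False
          using z \<open>Y \<subseteq> X\<close> D_C_final[of "(A, R')" S a] by (auto simp: D_def Y_def)
      next
        case 2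
        then show False
          using z by (auto simp: X_def)
      next
        case 3
        then show False
          using z cf by (auto simp: conflict_free_def)
      qed
    qed
    then show ?thesis
      by (auto simp: D_def)
  qed
  ultimately have "X \<subseteq> Y"
    unfolding G_def Y_def by (rule subset_C_final)
  then show ?thesis
    unfolding X_def W_def Y_def by blast
qed

lemma naive_C_final_more_attacks:
  assumes RR': "R \<subseteq> R'" "R' \<subseteq> conf (A, R)" and S: "S \<in> tfcf2 (A, R)"
  shows "naive (restr (A, R') (C_final (A, R') S a)) (S \<inter> C_final (A, R') S a)"
proof -
  define Y where "Y = C_final (A, R') S a"
  have "conflict_free (A, R) S"
    using S by (simp add: tfcf2_def)
  then have cf: "conflict_free (A, R') S"
    using RR'(2) by (rule conflict_free_subset_conf)
  have "T \<subseteq> S" if T: "T \<subseteq> Y" "conflict_free (A, R') T" "S \<inter> Y \<subseteq> T" for T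
  proof
    fix b assume "b \<in> T"
    have "b \<in> A"
      using T(2) \<open>b \<in> T\<close> by (auto simp: conflict_free_def)
    show "b \<in> S"
    proof (cases "\<exists>s\<in>S. (s, b) \<in> R")
      case True
      then obtain s where s: "s \<in> S" "(s, b) \<in> R'"
        using RR'(1) by blast
      then have "s \<in> Y"
        using D_C_final[of "(A, R')" S a] T(1) \<open>b \<in> T\<close> by (auto simp: D_def Y_def)
      with s T \<open>b \<in> T\<close> have False
        by (auto simp: conflict_free_def)
      then show ?thesis ..
    next
      case False
      define W where "W = C_final (A, R) S b"
      have "b \<in> W"
        using False \<open>b \<in> A\<close> mem_C_final_if_unattacked[of b "(A, R)" S] by (simp add: W_def)
      moreover have "W \<subseteq> Y"
        unfolding W_def Y_def
        by (rule C_final_subset_C_final_more_attacks[OF RR' cf])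
          (use T(1) \<open>b \<in> T\<close> \<open>b \<in> W\<close> in \<open>auto simp: W_def Y_def\<close>)
      ultimately have "conflict_free (restr (A, R) W) (insert b (S \<inter> W))"
        using T \<open>b \<in> T\<close> RR'(1) conflict_free_antimono[of A R' T "insert b (S \<inter> W)" R]
        by (auto simp: conflict_free_restr_iff)
      moreover have "naive (restr (A, R) W) (S \<inter> W)"
        using S \<open>b \<in> W\<close> \<open>b \<in> A\<close> by (auto simp: tfcf2_def W_def)
      ultimately show ?thesis
        unfolding naive_def by blast
    qed
  qed
  moreover have "conflict_free (A, R') (S \<inter> Y)"
    using cf Int_lower1 order_refl by (rule conflict_free_antimono)
  ultimately show ?thesis
    unfolding naive_def conflict_free_restr_iff Y_def[symmetric] by blast
qed

lemma tfcf2_more_attacks: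
  assumes "R \<subseteq> R'" "conf (A, R) = conf (A, R')" "S \<in> tfcf2 (A, R)"
  shows "S \<in> tfcf2 (A, R')"
proof -
  have R': "R' \<subseteq> conf (A, R)"
    using assms(2) by (simp add: conf_eq_Un_converse)
  have "conflict_free (A, R) S"
    using assms(3) by (simp add: tfcf2_def)
  then have "conflict_free (A, R') S"
    using R' by (rule conflict_free_subset_conf)
  with naive_C_final_more_attacks[OF assms(1) R' assms(3)] show ?thesis
    by (simp add: tfcf2_def)
qed

lemma skepticism_adequateI:
  fixes \<sigma> :: "'a af \<Rightarrow> 'a set set"
  assumes "\<And>T1 T2. T2 \<subseteq> T1 \<Longrightarrow> le T1 T2"
    and "\<And>A RF RG S. RG \<subseteq> RF \<Longrightarrow> conf (A, RG) = conf (A, RF) \<Longrightarrow> S \<in> \<sigma> (A, RG) \<Longrightarrow> S \<in> \<sigma> (A, RF)"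
  shows "skepticism_adequate \<sigma> le"
  unfolding skepticism_adequate_def
proof (intro allI impI)
  fix A :: "'a set" and RF RG
  assume "RF \<subseteq> A \<times> A \<and> RG \<subseteq> A \<times> A \<and> RG \<subseteq> RF \<and> conf (A, RF) = conf (A, RG)"
  then have "\<sigma> (A, RG) \<subseteq> \<sigma> (A, RF)"
    using assms(2)[of RG RF A] by blast
  then show "le (\<sigma> (A, RF)) (\<sigma> (A, RG))"
    by (rule assms(1))
qed

theorem theorem15:
  fixes A :: "'a set" and R R' :: "('a \<times> 'a) set" and S :: "'a set"
  assumes "R \<subseteq> A \<times> A" and "R' \<subseteq> A \<times> A"
    and "R \<subseteq> R'" and "conf (A, R) = conf (A, R')"
    and "S \<in> tfcf2 (A, R)"
  shows "S \<in> tfcf2 (A, R') \<and>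
    skepticism_adequate (tfcf2 :: 'a af \<Rightarrow> 'a set set) skept_cap \<and>
    skepticism_adequate (tfcf2 :: 'a af \<Rightarrow> 'a set set) skept_W"
proof (intro conjI)
  show "S \<in> tfcf2 (A, R')"
    using assms(3-5) by (rule tfcf2_more_attacks)
  show "skepticism_adequate (tfcf2 :: 'a af \<Rightarrow> 'a set set) skept_cap"
    using tfcf2_more_attacks by (rule skepticism_adequateI[rotated]) (auto simp: skept_cap_def)
  show "skepticism_adequate (tfcf2 :: 'a af \<Rightarrow> 'a set set) skept_W"
    using tfcf2_more_attacks by (rule skepticism_adequateI[rotated]) (auto simp: skept_W_def)
qed

end
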